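(* ($\mathbf{RCA_0}$) For any coded prae-dilator $T$, the linear order $\vartheta(T)$ is a Bachmann–Howard fixed point of $T$, i.e. there exists a Bachmann–Howard collapse $\vartheta:D^T_{\vartheta(T)}\to\vartheta(T)$.
   Context: Conventions. Each natural number $n$ is identified with the linear order $\{0,\dots,n-1\}$; the category of natural numbers has these as objects and strictly increasing maps as morphisms. For a finite linear order $a$ write $|a|$ for its cardinality and $\operatorname{en}_a:|a|\to a$ for the unique order isomorphism; for an order embedding $f:a\to b$ of finite linear orders, $|f|:|a|\to|b|$ is the unique strictly increasing map with $\operatorname{en}_b\circ|f|=f\circ\operatorname{en}_a$. For $c\subseteq d$, $\iota_c^d$ is the inclusion. $[X]^{<\omega}$ is the set of finite subsets of $X$, $[f]^{<\omega}(a)=\{f(s)\mid s\in a\}$. For a linear order $X$, $a\in[X]^{<\omega}$, $x\in X$: $a<^{\mathrm{fin}}_X x$ means $s<_Xx$ for all $s\in a$. A coded prae-dilator (represented by sets of natural numbers coding the orders $T_n$, the maps $T_f$ and the supports) consists of a functor $T$ from the category of natural numbers to linear orders with fields in $\mathbb N$, and a natural transformation $\operatorname{supp}^T:T\Rightarrow[\cdot]^{<\omega}$ ($\operatorname{supp}^T_m\circ T_f=[f]^{<\omega}\circ\operatorname{supp}^T_n$ for $f:n\to m$) such that every $\sigma\in T_n$ lies in the range of $T_{\iota\circ\operatorname{en}}$, with $\operatorname{en}=\operatorname{en}_{\operatorname{supp}^T_n(\sigma)}$ and $\iota$ the inclusion of $\operatorname{supp}^T_n(\sigma)$ into $n$.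 For a linear order $(X,<_X)$ with $X\subseteq\mathbb N$: $D^T_X=\{\langle a,\sigma\rangle\mid a\in[X]^{<\omega},\ \sigma\in T_{|a|},\ \operatorname{supp}^T_{|a|}(\sigma)=|a|\}$ ordered by $\langle a,\sigma\rangle<_{D^T_X}\langle b,\tau\rangle$ iff $T_{|\iota_a^{a\cup b}|}(\sigma)<_{T_{|a\cup b|}}T_{|\iota_b^{a\cup b}|}(\tau)$, with $\operatorname{supp}^{D^T}_X(\langle a,\sigma\rangle)=a$. A Bachmann–Howard collapse is a function $\vartheta:D^T_X\to X$ such that for all $\rho,\pi\in D^T_X$: (a) if $\rho<_{D^T_X}\pi$ and $\operatorname{supp}^{D^T}_X(\rho)<^{\mathrm{fin}}_X\vartheta(\pi)$ then $\vartheta(\rho)<_X\vartheta(\pi)$; (b) $\operatorname{supp}^{D^T}_X(\rho)<^{\mathrm{fin}}_X\vartheta(\rho)$. $X$ is then called a Bachmann–Howard fixed point of $T$. The order $\vartheta(T)$ (terms coded by natural numbers): defined by simultaneous recursion; whenever $s_0<_{\vartheta(T)}\dots<_{\vartheta(T)}s_{n-1}$ are in $\vartheta(T)$ ($n\geq0$) and $\sigma\in T_n$ with $\operatorname{supp}^T_n(\sigma)=n$, the term $\vartheta_\sigma^{s_0,\dots,s_{n-1}}$ is in $\vartheta(T)$. For $s=\vartheta_\sigma^{s_0,\dots,s_{n-1}}$, $t=\vartheta_\tau^{t_0,\dots,t_{m-1}}$: $s<_{\vartheta(T)}t$ iff (i') there are strictly increasing $f:n\to k$, $g:m\to k$, $k=|\{s_0,\dots,s_{n-1},t_0,\dots,t_{m-1}\}|$,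 with $f(i)<g(j)\Leftrightarrow s_i<_{\vartheta(T)}t_j$ and $g(j)<f(i)\Leftrightarrow t_j<_{\vartheta(T)}s_i$, such that $T_f(\sigma)<_{T_k}T_g(\tau)$, and moreover $n=0$ or $s_{n-1}<_{\vartheta(T)}t$; or (ii') $m>0$ and $s\leq_{\vartheta(T)}t_{m-1}$. *)

theory Defs
  imports Main
begin

definition rank :: "('a \<Rightarrow> 'a \<Rightarrow> bool) \<Rightarrow> 'a set \<Rightarrow> 'a \<Rightarrow> nat" where
  "rank lessX a x = card {y \<in> a. lessX y x}"

definition en :: "('a \<Rightarrow> 'a \<Rightarrow> bool) \<Rightarrow> 'a set \<Rightarrow> nat \<Rightarrow> 'a" where
  "en lessX a i = (THE x. x \<in> a \<and> rank lessX a x = i)"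

definition collapse_incl :: "('a \<Rightarrow> 'a \<Rightarrow> bool) \<Rightarrow> 'a set \<Rightarrow> 'a set \<Rightarrow> nat \<Rightarrow> nat" where
  "collapse_incl lessX a b = (\<lambda>i. rank lessX b (en lessX a i))"

definition strict_linear_on :: "'a set \<Rightarrow> ('a \<Rightarrow> 'a \<Rightarrow> bool) \<Rightarrow> bool" where
  "strict_linear_on A r \<longleftrightarrow>
     (\<forall>x\<in>A. \<not> r x x) \<and>
     (\<forall>x\<in>A. \<forall>y\<in>A. \<forall>z\<in>A. r x y \<longrightarrow> r y z \<longrightarrow> r x z) \<and>
     (\<forall>x\<in>A. \<forall>y\<in>A. x \<noteq> y \<longrightarrow> r x y \<or> r y x)"

text \<open>Morphisms f : n -> m of the category of natural numbers (strictly increasing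
  maps from the set of numbers below n to the set of numbers below m), represented by
  functions nat => nat whose values outside the domain are irrelevant.\<close>
definition nat_mor :: "nat \<Rightarrow> nat \<Rightarrow> (nat \<Rightarrow> nat) \<Rightarrow> bool" where
  "nat_mor n m f \<longleftrightarrow> strict_mono_on {..<n} f \<and> f ` {..<n} \<subseteq> {..<m}"

record praedil =
  Tset  :: "nat \<Rightarrow> nat set"
  Tless :: "nat \<Rightarrow> nat \<Rightarrow> nat \<Rightarrow> bool"
  Tmap  :: "nat \<Rightarrow> nat \<Rightarrow> (nat \<Rightarrow> nat) \<Rightarrow> nat \<Rightarrow> nat"
  Tsupp :: "nat \<Rightarrow> nat \<Rightarrow> nat set"

definition prae_dilator :: "praedil \<Rightarrow> bool" where
  "prae_dilator T \<longleftrightarrow>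
     \<comment> \<open>each T_n is a linear order\<close>
     (\<forall>n. strict_linear_on (Tset T n) (Tless T n)) \<and>
     \<comment> \<open>T_f is a morphism of linear orders (order embedding T_n -> T_m)\<close>
     (\<forall>n m f. nat_mor n m f \<longrightarrow>
        (\<forall>\<sigma>\<in>Tset T n. Tmap T n m f \<sigma> \<in> Tset T m) \<and>
        (\<forall>\<sigma>\<in>Tset T n. \<forall>\<tau>\<in>Tset T n. Tless T n \<sigma> \<tau> \<longrightarrow> Tless T m (Tmap T n m f \<sigma>) (Tmap T n m f \<tau>))) \<and>
     \<comment> \<open>T_f depends only on the morphism f, i.e. on f restricted to n\<close>
     (\<forall>n m f g. nat_mor n m f \<longrightarrow> (\<forall>i<n. f i = g i) \<longrightarrow>
        (\<forall>\<sigma>\<in>Tset T n. Tmap T n m f \<sigma> = Tmap T n m g \<sigma>)) \<and>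
     \<comment> \<open>functoriality\<close>
     (\<forall>n. \<forall>\<sigma>\<in>Tset T n. Tmap T n n id \<sigma> = \<sigma>) \<and>
     (\<forall>n m k f g. nat_mor n m f \<longrightarrow> nat_mor m k g \<longrightarrow>
        (\<forall>\<sigma>\<in>Tset T n. Tmap T n k (g \<circ> f) \<sigma> = Tmap T m k g (Tmap T n m f \<sigma>))) \<and>
     \<comment> \<open>supp is a natural transformation T => finite subsets\<close>
     (\<forall>n. \<forall>\<sigma>\<in>Tset T n. Tsupp T n \<sigma> \<subseteq> {..<n}) \<and>
     (\<forall>n m f. nat_mor n m f \<longrightarrow>
        (\<forall>\<sigma>\<in>Tset T n. Tsupp T m (Tmap T n m f \<sigma>) = f ` Tsupp T n \<sigma>)) \<and>
     \<comment> \<open>support condition: sigma lies in the range of T_(iota o en)\<close>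
     (\<forall>n. \<forall>\<sigma>\<in>Tset T n.
        \<exists>\<tau>\<in>Tset T (card (Tsupp T n \<sigma>)).
          \<sigma> = Tmap T (card (Tsupp T n \<sigma>)) n (en (<) (Tsupp T n \<sigma>)) \<tau>)"

text \<open>Elements <a, sigma> of D^T_X are represented as pairs (a, sigma).\<close>
definition DT :: "praedil \<Rightarrow> 'a set \<Rightarrow> ('a \<Rightarrow> 'a \<Rightarrow> bool) \<Rightarrow> ('a set \<times> nat) set" where
  "DT T X lessX = {(a, \<sigma>). finite a \<and> a \<subseteq> X \<and> \<sigma> \<in> Tset T (card a) \<and>
                            Tsupp T (card a) \<sigma> = {..<card a}}"

definition DT_less :: "praedil \<Rightarrow> ('a \<Rightarrow> 'a \<Rightarrow> bool) \<Rightarrow> ('a set \<times> nat) \<Rightarrow> ('a set \<times> nat) \<Rightarrow> bool" where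
  "DT_less T lessX p q = (case p of (a, \<sigma>) \<Rightarrow> case q of (b, \<tau>) \<Rightarrow>
     Tless T (card (a \<union> b))
       (Tmap T (card a) (card (a \<union> b)) (collapse_incl lessX a (a \<union> b)) \<sigma>)
       (Tmap T (card b) (card (a \<union> b)) (collapse_incl lessX b (a \<union> b)) \<tau>))"

definition DT_supp :: "('a set \<times> nat) \<Rightarrow> 'a set" where
  "DT_supp p = fst p"

definition fin_less :: "('a \<Rightarrow> 'a \<Rightarrow> bool) \<Rightarrow> 'a set \<Rightarrow> 'a \<Rightarrow> bool" where
  "fin_less lessX a x \<longleftrightarrow> (\<forall>s\<in>a. lessX s x)"

definition bh_collapse ::
  "praedil \<Rightarrow> 'a set \<Rightarrow> ('a \<Rightarrow> 'a \<Rightarrow> bool) \<Rightarrow> ('a set \<times> nat \<Rightarrow> 'a) \<Rightarrow> bool" where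
  "bh_collapse T X lessX \<theta> \<longleftrightarrow>
     (\<forall>\<rho>\<in>DT T X lessX. \<theta> \<rho> \<in> X) \<and>
     (\<forall>\<rho>\<in>DT T X lessX. \<forall>\<pi>\<in>DT T X lessX.
        DT_less T lessX \<rho> \<pi> \<longrightarrow> fin_less lessX (DT_supp \<rho>) (\<theta> \<pi>) \<longrightarrow> lessX (\<theta> \<rho>) (\<theta> \<pi>)) \<and>
     (\<forall>\<rho>\<in>DT T X lessX. fin_less lessX (DT_supp \<rho>) (\<theta> \<rho>))"

definition bh_fixed_point :: "praedil \<Rightarrow> 'a set \<Rightarrow> ('a \<Rightarrow> 'a \<Rightarrow> bool) \<Rightarrow> bool" where
  "bh_fixed_point T X lessX \<longleftrightarrow>
     strict_linear_on X lessX \<and> (\<exists>\<theta>. bh_collapse T X lessX \<theta>)"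

text \<open>Th sigma [s_0, ..., s_(n-1)] stands for the term vartheta_sigma^(s_0,...,s_(n-1)).\<close>
datatype thterm = Th nat "thterm list"

lemma size_mem_le: "x \<in> set xs \<Longrightarrow> size x \<le> size_list size (xs :: thterm list)"
  by (rule size_list_estimation') auto

function thless :: "praedil \<Rightarrow> thterm \<Rightarrow> thterm \<Rightarrow> bool" where
  "thless T (Th \<sigma> ss) (Th \<tau> ts) =
    (((\<exists>f g. nat_mor (length ss) (card (set ss \<union> set ts)) f \<and>
             nat_mor (length ts) (card (set ss \<union> set ts)) g \<and>
             (\<forall>i<length ss. \<forall>j<length ts.
                (f i < g j \<longleftrightarrow> thless T (ss ! i) (ts ! j)) \<and>
                (g j < f i \<longleftrightarrow> thless T (ts ! j) (ss ! i))) \<and>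
             Tless T (card (set ss \<union> set ts))
               (Tmap T (length ss) (card (set ss \<union> set ts)) f \<sigma>)
               (Tmap T (length ts) (card (set ss \<union> set ts)) g \<tau>)) \<and>
      (ss \<noteq> [] \<longrightarrow> thless T (last ss) (Th \<tau> ts)))
     \<or> (if ts = [] then False
        else (thless T (Th \<sigma> ss) (last ts) \<or> Th \<sigma> ss = last ts)))"
  by pat_completeness auto
termination
  apply (relation "measure (\<lambda>(T, s, t). size s + size t)")
  apply simp_all
  by (auto dest!: size_mem_le[OF nth_mem] size_mem_le[OF last_in_set])

inductive_set thT :: "praedil \<Rightarrow> thterm set" for T :: praedil where
  thT_intro: "\<lbrakk>\<forall>s\<in>set ss. s \<in> thT T; successively (thless T) ss;
     \<sigma> \<in> Tset T (length ss); Tsupp T (length ss) \<sigma> = {..<length ss}\<rbrakk>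
   \<Longrightarrow> Th \<sigma> ss \<in> thT T"

end

theory Submission
  imports Defs
begin

(* Once the subterms are known to be linearly ordered, an increasing list ss of subterms is
   determined by its set, and the maps f, g of clause (i') are forced to be the collapses of the
   inclusions of set ss and set ts into their union; so clause (i') compares (set ss, sigma) and
   (set ts, tau) in D^T. As D^T of a linear order is linear, induction on the size of terms shows
   that vartheta(T) is a linear order. The collapse sends <a, sigma> to the term with label sigma
   and the increasing enumeration of a as subterms: this term lies above a by clause (ii'), and
   condition (a) of a Bachmann-Howard collapse is then exactly clause (i'). *)

section \<open>Strict linear orders and enumerations of finite subsets\<close>

lemma strict_linear_on_irrefl: "strict_linear_on X r \<Longrightarrow> x \<in> X \<Longrightarrow> \<not> r x x"
  unfolding strict_linear_on_def by blast

lemma strict_linear_on_trans: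
  "strict_linear_on X r \<Longrightarrow> x \<in> X \<Longrightarrow> y \<in> X \<Longrightarrow> z \<in> X \<Longrightarrow> r x y \<Longrightarrow> r y z \<Longrightarrow> r x z"
  unfolding strict_linear_on_def by blast

lemma strict_linear_on_total:
  "strict_linear_on X r \<Longrightarrow> x \<in> X \<Longrightarrow> y \<in> X \<Longrightarrow> x \<noteq> y \<Longrightarrow> r x y \<or> r y x"
  unfolding strict_linear_on_def by blast

lemma strict_linear_on_asym: "strict_linear_on X r \<Longrightarrow> x \<in> X \<Longrightarrow> y \<in> X \<Longrightarrow> r x y \<Longrightarrow> \<not> r y x"
  unfolding strict_linear_on_def by blast

definition ordered_list :: "('a \<Rightarrow> 'a \<Rightarrow> bool) \<Rightarrow> 'a set \<Rightarrow> 'a list" where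
  "ordered_list r a = map (en r a) [0..<card a]"

context
  fixes X :: "'a set" and r :: "'a \<Rightarrow> 'a \<Rightarrow> bool"
  assumes lin: "strict_linear_on X r"
begin

lemma rank_less_card:
  assumes "a \<subseteq> X" "finite a" "x \<in> a"
  shows "rank r a x < card a"
proof -
  have "{y \<in> a. r y x} \<subset> a" using assms strict_linear_on_irrefl[OF lin, of x] by blast
  then show ?thesis unfolding rank_def using assms(2) by (simp add: psubset_card_mono)
qed

lemma rank_less_rank:
  assumes "a \<subseteq> X" "finite a" "x \<in> a" "y \<in> a" "r x y"
  shows "rank r a x < rank r a y"
proof -
  have "{z \<in> a. r z x} \<subset> {z \<in> a. r z y}"
    using assms strict_linear_on_irrefl[OF lin, of x] strict_linear_on_trans[OF lin] by blast
  then show ?thesis unfolding rank_def using assms(2) by (simp add: psubset_card_mono)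
qed

lemma rank_less_rank_iff:
  assumes "a \<subseteq> X" "finite a" "x \<in> a" "y \<in> a"
  shows "rank r a x < rank r a y \<longleftrightarrow> r x y"
  using rank_less_rank[OF assms] rank_less_rank[OF assms(1,2,4,3)] strict_linear_on_total[OF lin, of x y]
    assms by (metis in_mono less_asym less_irrefl)

lemma inj_on_rank:
  assumes "a \<subseteq> X" "finite a"
  shows "inj_on (rank r a) a"
  by (rule inj_onI) (metis assms rank_less_rank_iff less_irrefl strict_linear_on_total[OF lin] in_mono)

lemma rank_image:
  assumes "a \<subseteq> X" "finite a"
  shows "rank r a ` a = {..<card a}"
proof (rule card_subset_eq)
  show "rank r a ` a \<subseteq> {..<card a}" using rank_less_card[OF assms] by auto
  show "card (rank r a ` a) = card {..<card a}"
    using card_image[OF inj_on_rank[OF assms]] by simp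
qed simp

lemma en_in_rank_en:
  assumes "a \<subseteq> X" "finite a" "i < card a"
  shows "en r a i \<in> a \<and> rank r a (en r a i) = i"
proof -
  have "\<exists>!x. x \<in> a \<and> rank r a x = i"
    using rank_image[OF assms(1,2)] inj_on_rank[OF assms(1,2)] assms(3)
    by (metis imageE inj_on_contraD lessThan_iff)
  then show ?thesis unfolding en_def by (rule theI')
qed

lemma en_in: "a \<subseteq> X \<Longrightarrow> finite a \<Longrightarrow> i < card a \<Longrightarrow> en r a i \<in> a"
  using en_in_rank_en by blast

lemma rank_en: "a \<subseteq> X \<Longrightarrow> finite a \<Longrightarrow> i < card a \<Longrightarrow> rank r a (en r a i) = i"
  using en_in_rank_en by blast

lemma en_rank:
  assumes "a \<subseteq> X" "finite a" "x \<in> a"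
  shows "en r a (rank r a x) = x"
  using inj_on_rank[OF assms(1,2)] en_in_rank_en[OF assms(1,2) rank_less_card[OF assms]] assms(3)
  by (auto dest: inj_onD)

lemma en_less_en_iff:
  assumes "a \<subseteq> X" "finite a" "i < card a" "j < card a"
  shows "r (en r a i) (en r a j) \<longleftrightarrow> i < j"
  using rank_less_rank_iff[OF assms(1,2) en_in[OF assms(1-3)] en_in[OF assms(1,2,4)]]
  by (simp add: rank_en assms)

lemma en_image:
  assumes "a \<subseteq> X" "finite a"
  shows "en r a ` {..<card a} = a"
proof
  show "en r a ` {..<card a} \<subseteq> a" using en_in[OF assms] by auto
  show "a \<subseteq> en r a ` {..<card a}"
    using en_rank[OF assms] rank_less_card[OF assms] by (metis image_eqI lessThan_iff subsetI)
qed

lemma rank_eqI: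
  assumes U: "U \<subseteq> X" "finite U"
    and h_less: "\<And>x. x \<in> U \<Longrightarrow> h x < card U"
    and h_iff: "\<And>x y. x \<in> U \<Longrightarrow> y \<in> U \<Longrightarrow> r x y \<longleftrightarrow> h x < h y"
    and x: "x \<in> U"
  shows "h x = rank r U x"
proof -
  have inj: "inj_on h U"
    by (rule inj_onI) (metis U(1) h_iff less_irrefl strict_linear_on_total[OF lin] in_mono)
  have img: "h ` U = {..<card U}"
    by (rule card_subset_eq) (use h_less card_image[OF inj] in auto)
  have "rank r U x = card {y \<in> U. h y < h x}"
    unfolding rank_def using h_iff x by (metis (no_types, lifting))
  also have "\<dots> = card (h ` {y \<in> U. h y < h x})"
    by (rule card_image[symmetric], rule inj_on_subset[OF inj]) auto
  also have "h ` {y \<in> U. h y < h x} = {..<h x}"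
    using img h_less[OF x] by (auto simp: image_iff)
  finally show ?thesis by simp
qed

context
  fixes xs :: "'a list"
  assumes set_xs: "set xs \<subseteq> X" and sorted_xs: "sorted_wrt r xs"
begin

lemma sorted_nth_less_nth_iff:
  assumes "i < length xs" "j < length xs"
  shows "r (xs ! i) (xs ! j) \<longleftrightarrow> i < j"
proof
  have X: "xs ! i \<in> X" "xs ! j \<in> X" using assms set_xs nth_mem by blast+
  assume "r (xs ! i) (xs ! j)"
  then show "i < j"
    using sorted_wrt_nth_less[OF sorted_xs, of j i] assms X
      strict_linear_on_irrefl[OF lin] strict_linear_on_asym[OF lin]
    by (metis linorder_neqE_nat)
qed (use sorted_xs assms in \<open>simp add: sorted_wrt_nth_less\<close>)

lemma sorted_distinct: "distinct xs"
  using sorted_nth_less_nth_iff strict_linear_on_irrefl[OF lin] set_xs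
  by (metis distinct_conv_nth nth_mem subsetD linorder_neqE_nat)

lemma card_set_sorted: "card (set xs) = length xs"
  by (rule distinct_card[OF sorted_distinct])

lemma rank_sorted_nth:
  assumes i: "i < length xs"
  shows "rank r (set xs) (xs ! i) = i"
proof -
  have "{y \<in> set xs. r y (xs ! i)} = nth xs ` {..<i}"
    using i sorted_nth_less_nth_iff[OF _ i] by (auto simp: in_set_conv_nth image_iff) (metis less_trans)
  moreover have "inj_on (nth xs) {..<i}"
    using inj_on_nth[OF sorted_distinct, of "{..<i}"] i by auto
  ultimately show ?thesis unfolding rank_def by (simp add: card_image)
qed

lemma en_sorted_nth: "i < length xs \<Longrightarrow> en r (set xs) i = xs ! i"
  using en_rank[OF set_xs finite_set nth_mem] rank_sorted_nth by metis

lemma collapse_incl_sorted_nth: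
  "i < length xs \<Longrightarrow> collapse_incl r (set xs) b i = rank r b (xs ! i)"
  unfolding collapse_incl_def by (simp add: en_sorted_nth)

lemma sorted_wrt_le_last: "x \<in> set xs \<Longrightarrow> x = last xs \<or> r x (last xs)"
  using sorted_xs by (induction xs rule: rev_induct) (auto simp: sorted_wrt_append)

end

lemma sorted_list_unique:
  assumes "set xs \<subseteq> X" "sorted_wrt r xs" "sorted_wrt r ys" "set ys = set xs"
  shows "ys = xs"
proof (rule nth_equalityI)
  have ys: "set ys \<subseteq> X" using assms by simp
  show l: "length ys = length xs"
    using card_set_sorted[OF assms(1,2)] card_set_sorted[OF ys assms(3)] assms(4) by simp
  show "ys ! i = xs ! i" if "i < length ys" for i
    using en_sorted_nth[OF assms(1,2)] en_sorted_nth[OF ys assms(3)] l assms(4) that by metis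
qed

lemma
  assumes "a \<subseteq> X" "finite a"
  shows set_ordered_list: "set (ordered_list r a) = a"
    and sorted_ordered_list: "sorted_wrt r (ordered_list r a)"
    and length_ordered_list: "length (ordered_list r a) = card a"
  unfolding ordered_list_def using en_image[OF assms] en_less_en_iff[OF assms]
  by (auto simp: atLeast0LessThan sorted_wrt_iff_nth_less)

lemma nat_mor_collapse_incl:
  assumes "b \<subseteq> X" "finite b" "a \<subseteq> b"
  shows "nat_mor (card a) (card b) (collapse_incl r a b)"
proof -
  have a: "a \<subseteq> X" "finite a" using assms finite_subset[of a b] by auto
  have "rank r b (en r a i) < rank r b (en r a j)" if "i < j" "j < card a" for i j
    using rank_less_rank[OF assms(1,2)] en_in[OF a] en_less_en_iff[OF a] that assms(3)
    by (meson order.strict_trans subsetD)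
  moreover have "rank r b (en r a i) < card b" if "i < card a" for i
    using rank_less_card[OF assms(1,2)] en_in[OF a that] assms(3) by auto
  ultimately show ?thesis unfolding nat_mor_def strict_mono_on_def collapse_incl_def by auto
qed

lemma collapse_incl_collapse_incl:
  assumes "c \<subseteq> X" "finite c" "a \<subseteq> b" "b \<subseteq> c" "i < card a"
  shows "collapse_incl r b c (collapse_incl r a b i) = collapse_incl r a c i"
proof -
  have "a \<subseteq> X" "finite a" "b \<subseteq> X" "finite b"
    using assms finite_subset[of a c] finite_subset[of b c] by auto
  then show ?thesis unfolding collapse_incl_def using en_rank en_in assms by (metis subsetD)
qed

lemma collapse_incl_image:
  assumes "a \<subseteq> X" "finite a"
  shows "collapse_incl r a b ` {..<card a} = rank r b ` a"
  unfolding collapse_incl_def using en_image[OF assms] by (metis image_image)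

end

section \<open>Interleavings\<close>

definition interleaving ::
  "('a \<Rightarrow> 'a \<Rightarrow> bool) \<Rightarrow> 'a list \<Rightarrow> 'a list \<Rightarrow> (nat \<Rightarrow> nat) \<Rightarrow> (nat \<Rightarrow> nat) \<Rightarrow> bool" where
  "interleaving r ss ts f g \<longleftrightarrow>
     (\<forall>i<length ss. \<forall>j<length ts.
        (f i < g j \<longleftrightarrow> r (ss ! i) (ts ! j)) \<and> (g j < f i \<longleftrightarrow> r (ts ! j) (ss ! i)))"

lemma interleaving_commute: "interleaving r ss ts f g \<longleftrightarrow> interleaving r ts ss g f"
  unfolding interleaving_def by blast

lemma nat_mor_less_card: "nat_mor n m f \<Longrightarrow> i < n \<Longrightarrow> f i < m"
  unfolding nat_mor_def by blast

lemma nat_mor_less_iff: "nat_mor n m f \<Longrightarrow> i < n \<Longrightarrow> j < n \<Longrightarrow> f i < f j \<longleftrightarrow> i < j"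
  unfolding nat_mor_def strict_mono_on_def by (metis lessThan_iff less_asym linorder_neqE_nat)

context
  fixes X :: "'a set" and r :: "'a \<Rightarrow> 'a \<Rightarrow> bool" and ss ts :: "'a list"
  assumes lin: "strict_linear_on X r"
    and set_ss: "set ss \<subseteq> X" and sorted_ss: "sorted_wrt r ss"
    and set_ts: "set ts \<subseteq> X" and sorted_ts: "sorted_wrt r ts"
begin

lemma interleaving_collapse_incl:
  "interleaving r ss ts (collapse_incl r (set ss) (set ss \<union> set ts)) (collapse_incl r (set ts) (set ss \<union> set ts))"
  unfolding interleaving_def
  using collapse_incl_sorted_nth[OF lin set_ss sorted_ss] collapse_incl_sorted_nth[OF lin set_ts sorted_ts]
    rank_less_rank_iff[OF lin, of "set ss \<union> set ts"] set_ss set_ts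
  by simp

text \<open>\<open>f\<close> and \<open>g\<close> glue to an order isomorphism of \<open>set ss \<union> set ts\<close> onto an initial segment
  of \<open>\<nat>\<close>, which must be the rank.\<close>

lemma interleaving_eq_collapse_incl:
  assumes f: "nat_mor (length ss) (card (set ss \<union> set ts)) f"
    and g: "nat_mor (length ts) (card (set ss \<union> set ts)) g"
    and fg: "interleaving r ss ts f g" and i: "i < length ss"
  shows "f i = collapse_incl r (set ss) (set ss \<union> set ts) i"
proof -
  define U where "U = set ss \<union> set ts"
  define h where "h x = (if x \<in> set ss then f (rank r (set ss) x) else g (rank r (set ts) x))" for x
  have h_ss: "h (ss ! k) = f k" if "k < length ss" for k
    unfolding h_def using rank_sorted_nth[OF lin set_ss sorted_ss that] that by simp
  have h_ts: "h (ts ! j) = g j" if j: "j < length ts" for j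
  proof (cases "ts ! j \<in> set ss")
    case True
    then obtain k where k: "k < length ss" "ss ! k = ts ! j" by (auto simp: in_set_conv_nth)
    have "\<not> r (ts ! j) (ts ! j)" using strict_linear_on_irrefl[OF lin] set_ts nth_mem[OF j] by blast
    then have "f k = g j" using fg k j unfolding interleaving_def by (metis linorder_neqE_nat)
    then show ?thesis using h_ss k by metis
  next
    case False
    then show ?thesis unfolding h_def using rank_sorted_nth[OF lin set_ts sorted_ts j] by simp
  qed
  have U_cases: "(\<exists>i<length ss. x = ss ! i) \<or> (\<exists>j<length ts. x = ts ! j)" if "x \<in> U" for x
    using that unfolding U_def by (auto simp: in_set_conv_nth)
  have "h x < card U" if "x \<in> U" for x
    using U_cases[OF that] h_ss h_ts nat_mor_less_card[OF f] nat_mor_less_card[OF g]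
    unfolding U_def by auto
  moreover have "r x y \<longleftrightarrow> h x < h y" if "x \<in> U" "y \<in> U" for x y
    using U_cases[OF that(1)] U_cases[OF that(2)] fg h_ss h_ts
      sorted_nth_less_nth_iff[OF lin set_ss sorted_ss] sorted_nth_less_nth_iff[OF lin set_ts sorted_ts]
      nat_mor_less_iff[OF f] nat_mor_less_iff[OF g]
    unfolding interleaving_def by auto
  ultimately have "h (ss ! i) = rank r U (ss ! i)"
    using rank_eqI[OF lin, of U h] set_ss set_ts i unfolding U_def by auto
  then show ?thesis
    using h_ss[OF i] collapse_incl_sorted_nth[OF lin set_ss sorted_ss i] unfolding U_def by simp
qed

end

section \<open>Prae-dilators and the order \<open>D\<^sup>T\<^sub>X\<close>\<close>

abbreviation Tmap_incl :: "praedil \<Rightarrow> ('a \<Rightarrow> 'a \<Rightarrow> bool) \<Rightarrow> 'a set \<Rightarrow> 'a set \<Rightarrow> nat \<Rightarrow> nat" where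
  "Tmap_incl T r a b \<equiv> Tmap T (card a) (card b) (collapse_incl r a b)"

text \<open>The comparison of clause (i') of the order on \<open>\<vartheta>(T)\<close>, with \<open>r\<close> in place of the order on subterms.\<close>

definition interleaved_less :: "praedil \<Rightarrow> ('a \<Rightarrow> 'a \<Rightarrow> bool) \<Rightarrow> 'a list \<Rightarrow> nat \<Rightarrow> 'a list \<Rightarrow> nat \<Rightarrow> bool" where
  "interleaved_less T r ss \<sigma> ts \<tau> \<longleftrightarrow>
     (\<exists>f g. nat_mor (length ss) (card (set ss \<union> set ts)) f \<and>
        nat_mor (length ts) (card (set ss \<union> set ts)) g \<and> interleaving r ss ts f g \<and>
        Tless T (card (set ss \<union> set ts))
          (Tmap T (length ss) (card (set ss \<union> set ts)) f \<sigma>) (Tmap T (length ts) (card (set ss \<union> set ts)) g \<tau>))"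

context
  fixes T :: praedil
  assumes T: "prae_dilator T"
begin

lemma strict_linear_on_Tset: "strict_linear_on (Tset T n) (Tless T n)"
  using T[unfolded prae_dilator_def, THEN conjunct1] by blast

lemma Tmap_in_Tset: "nat_mor n m f \<Longrightarrow> \<sigma> \<in> Tset T n \<Longrightarrow> Tmap T n m f \<sigma> \<in> Tset T m"
  using T[unfolded prae_dilator_def, THEN conjunct2, THEN conjunct1] by blast

lemma Tmap_mono:
  "nat_mor n m f \<Longrightarrow> \<sigma> \<in> Tset T n \<Longrightarrow> \<tau> \<in> Tset T n \<Longrightarrow> Tless T n \<sigma> \<tau> \<Longrightarrow>
   Tless T m (Tmap T n m f \<sigma>) (Tmap T n m f \<tau>)"
  using T[unfolded prae_dilator_def, THEN conjunct2, THEN conjunct1] by blast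

lemma Tmap_cong:
  "nat_mor n m f \<Longrightarrow> (\<And>i. i < n \<Longrightarrow> f i = g i) \<Longrightarrow> \<sigma> \<in> Tset T n \<Longrightarrow>
   Tmap T n m f \<sigma> = Tmap T n m g \<sigma>"
  using T[unfolded prae_dilator_def, THEN conjunct2, THEN conjunct2, THEN conjunct1] by blast

lemma Tmap_comp:
  "nat_mor n m f \<Longrightarrow> nat_mor m k g \<Longrightarrow> \<sigma> \<in> Tset T n \<Longrightarrow>
   Tmap T n k (g \<circ> f) \<sigma> = Tmap T m k g (Tmap T n m f \<sigma>)"
  using T[unfolded prae_dilator_def, THEN conjunct2, THEN conjunct2, THEN conjunct2, THEN conjunct2,
      THEN conjunct1] by blast

lemma Tsupp_Tmap: "nat_mor n m f \<Longrightarrow> \<sigma> \<in> Tset T n \<Longrightarrow> Tsupp T m (Tmap T n m f \<sigma>) = f ` Tsupp T n \<sigma>"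
  using T[unfolded prae_dilator_def, THEN conjunct2, THEN conjunct2, THEN conjunct2, THEN conjunct2,
      THEN conjunct2, THEN conjunct2, THEN conjunct1] by blast

lemma Tmap_less_Tmap_iff:
  assumes f: "nat_mor n m f" and \<sigma>: "\<sigma> \<in> Tset T n" and \<tau>: "\<tau> \<in> Tset T n"
  shows "Tless T m (Tmap T n m f \<sigma>) (Tmap T n m f \<tau>) \<longleftrightarrow> Tless T n \<sigma> \<tau>"
proof
  assume less: "Tless T m (Tmap T n m f \<sigma>) (Tmap T n m f \<tau>)"
  have in_m: "Tmap T n m f \<sigma> \<in> Tset T m" "Tmap T n m f \<tau> \<in> Tset T m"
    using Tmap_in_Tset[OF f] \<sigma> \<tau> by auto
  show "Tless T n \<sigma> \<tau>"
  proof (rule ccontr)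
    assume "\<not> Tless T n \<sigma> \<tau>"
    then consider "\<sigma> = \<tau>" | "Tless T n \<tau> \<sigma>"
      using strict_linear_on_total[OF strict_linear_on_Tset \<sigma> \<tau>] by blast
    then show False
    proof cases
      case 1
      then show False using less in_m strict_linear_on_irrefl[OF strict_linear_on_Tset] by simp
    next
      case 2
      then show False
        using less Tmap_mono[OF f \<tau> \<sigma>] strict_linear_on_asym[OF strict_linear_on_Tset in_m] by blast
    qed
  qed
qed (rule Tmap_mono[OF f \<sigma> \<tau>])

lemma Tmap_inj:
  assumes "nat_mor n m f" "\<sigma> \<in> Tset T n" "\<tau> \<in> Tset T n" "Tmap T n m f \<sigma> = Tmap T n m f \<tau>"
  shows "\<sigma> = \<tau>"
proof (rule ccontr)
  assume "\<sigma> \<noteq> \<tau>"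
  then have "Tless T n \<sigma> \<tau> \<or> Tless T n \<tau> \<sigma>"
    using strict_linear_on_total[OF strict_linear_on_Tset assms(2,3)] by blast
  then show False
    using Tmap_mono[OF assms(1-3)] Tmap_mono[OF assms(1,3,2)] assms(4) Tmap_in_Tset[OF assms(1,2)]
      strict_linear_on_irrefl[OF strict_linear_on_Tset] by auto
qed

context
  fixes X :: "'a set" and r :: "'a \<Rightarrow> 'a \<Rightarrow> bool"
  assumes lin: "strict_linear_on X r"
begin

lemma Tmap_incl_in_Tset:
  "b \<subseteq> X \<Longrightarrow> finite b \<Longrightarrow> a \<subseteq> b \<Longrightarrow> \<sigma> \<in> Tset T (card a) \<Longrightarrow> Tmap_incl T r a b \<sigma> \<in> Tset T (card b)"
  by (rule Tmap_in_Tset[OF nat_mor_collapse_incl[OF lin]])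

lemma Tmap_incl_Tmap_incl:
  assumes c: "c \<subseteq> X" "finite c" and ab: "a \<subseteq> b" and bc: "b \<subseteq> c" and \<sigma>: "\<sigma> \<in> Tset T (card a)"
  shows "Tmap_incl T r b c (Tmap_incl T r a b \<sigma>) = Tmap_incl T r a c \<sigma>"
proof -
  have b: "b \<subseteq> X" "finite b" using c bc finite_subset[of b c] by auto
  have "Tmap_incl T r a c \<sigma> = Tmap T (card a) (card c) (collapse_incl r b c \<circ> collapse_incl r a b) \<sigma>"
    by (rule Tmap_cong[OF nat_mor_collapse_incl[OF lin c subset_trans[OF ab bc]] _ \<sigma>])
      (simp add: collapse_incl_collapse_incl[OF lin c ab bc])
  also have "\<dots> = Tmap_incl T r b c (Tmap_incl T r a b \<sigma>)"
    by (rule Tmap_comp[OF nat_mor_collapse_incl[OF lin b ab] nat_mor_collapse_incl[OF lin c bc] \<sigma>])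
  finally show ?thesis by simp
qed

lemma DT_less_iff_Tless:
  assumes "c \<subseteq> X" "finite c" "a \<subseteq> c" "b \<subseteq> c" "\<sigma> \<in> Tset T (card a)" "\<tau> \<in> Tset T (card b)"
  shows "DT_less T r (a, \<sigma>) (b, \<tau>) \<longleftrightarrow> Tless T (card c) (Tmap_incl T r a c \<sigma>) (Tmap_incl T r b c \<tau>)"
proof -
  let ?u = "a \<union> b"
  have u: "?u \<subseteq> c" "?u \<subseteq> X" "finite ?u" using assms finite_subset[of ?u c] by auto
  have "DT_less T r (a, \<sigma>) (b, \<tau>) \<longleftrightarrow>
      Tless T (card c) (Tmap_incl T r ?u c (Tmap_incl T r a ?u \<sigma>)) (Tmap_incl T r ?u c (Tmap_incl T r b ?u \<tau>))"
    unfolding DT_less_def prod.case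
    using Tmap_incl_in_Tset[OF u(2,3)] assms(5,6)
    by (intro Tmap_less_Tmap_iff[symmetric] nat_mor_collapse_incl[OF lin assms(1,2) u(1)]) auto
  then show ?thesis using Tmap_incl_Tmap_incl[OF assms(1,2)] u(1) assms(5,6) by simp
qed

lemma DT_less_irrefl:
  assumes "(a, \<sigma>) \<in> DT T X r"
  shows "\<not> DT_less T r (a, \<sigma>) (a, \<sigma>)"
proof -
  have a: "a \<subseteq> X" "finite a" and \<sigma>: "\<sigma> \<in> Tset T (card a)" using assms unfolding DT_def by auto
  have "Tmap_incl T r a a \<sigma> \<in> Tset T (card a)" by (rule Tmap_incl_in_Tset[OF a subset_refl \<sigma>])
  then show ?thesis
    unfolding DT_less_iff_Tless[OF a subset_refl subset_refl \<sigma> \<sigma>]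
    by (rule strict_linear_on_irrefl[OF strict_linear_on_Tset])
qed

lemma DT_less_trans:
  assumes "(a, \<sigma>) \<in> DT T X r" "(b, \<tau>) \<in> DT T X r" "(c, \<upsilon>) \<in> DT T X r"
    and ab: "DT_less T r (a, \<sigma>) (b, \<tau>)" and bc: "DT_less T r (b, \<tau>) (c, \<upsilon>)"
  shows "DT_less T r (a, \<sigma>) (c, \<upsilon>)"
proof -
  let ?u = "a \<union> b \<union> c"
  have u: "?u \<subseteq> X" "finite ?u" and \<sigma>: "\<sigma> \<in> Tset T (card a)" and \<tau>: "\<tau> \<in> Tset T (card b)"
    and \<upsilon>: "\<upsilon> \<in> Tset T (card c)"
    using assms(1-3) unfolding DT_def by auto
  have sub: "a \<subseteq> ?u" "b \<subseteq> ?u" "c \<subseteq> ?u" by auto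
  note iff = DT_less_iff_Tless[OF u]
  show ?thesis
    unfolding iff[OF sub(1,3) \<sigma> \<upsilon>]
    using ab bc unfolding iff[OF sub(1,2) \<sigma> \<tau>] iff[OF sub(2,3) \<tau> \<upsilon>]
    by (rule strict_linear_on_trans[OF strict_linear_on_Tset Tmap_incl_in_Tset[OF u sub(1) \<sigma>]
          Tmap_incl_in_Tset[OF u sub(2) \<tau>] Tmap_incl_in_Tset[OF u sub(3) \<upsilon>]])
qed

lemma DT_less_total:
  assumes a: "(a, \<sigma>) \<in> DT T X r" and b: "(b, \<tau>) \<in> DT T X r" and neq: "(a, \<sigma>) \<noteq> (b, \<tau>)"
  shows "DT_less T r (a, \<sigma>) (b, \<tau>) \<or> DT_less T r (b, \<tau>) (a, \<sigma>)"
proof -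
  let ?u = "a \<union> b"
  have u: "?u \<subseteq> X" "finite ?u" and X: "a \<subseteq> X" "finite a" "b \<subseteq> X" "finite b"
    and \<sigma>: "\<sigma> \<in> Tset T (card a)" "Tsupp T (card a) \<sigma> = {..<card a}"
    and \<tau>: "\<tau> \<in> Tset T (card b)" "Tsupp T (card b) \<tau> = {..<card b}"
    using a b unfolding DT_def by auto
  have mor: "nat_mor (card a) (card ?u) (collapse_incl r a ?u)"
    "nat_mor (card b) (card ?u) (collapse_incl r b ?u)"
    using nat_mor_collapse_incl[OF lin u] by auto
  have "Tmap_incl T r a ?u \<sigma> \<noteq> Tmap_incl T r b ?u \<tau>"
  proof
    assume eq: "Tmap_incl T r a ?u \<sigma> = Tmap_incl T r b ?u \<tau>"
    \<comment> \<open>both sides have full support, so their supports are the images of a and b in ?u\<close>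
    have "rank r ?u ` a = Tsupp T (card ?u) (Tmap_incl T r a ?u \<sigma>)"
      using Tsupp_Tmap[OF mor(1) \<sigma>(1)] collapse_incl_image[OF lin X(1,2)] \<sigma>(2) by simp
    also have "\<dots> = rank r ?u ` b"
      using Tsupp_Tmap[OF mor(2) \<tau>(1)] collapse_incl_image[OF lin X(3,4)] \<tau>(2) eq by simp
    finally have "a = b" using inj_on_image_eq_iff[OF inj_on_rank[OF lin u]] by blast
    moreover have "\<sigma> = \<tau>" using Tmap_inj[OF mor(1) \<sigma>(1)] eq \<tau>(1) \<open>a = b\<close> by simp
    ultimately show False using neq by simp
  qed
  then have "Tless T (card ?u) (Tmap_incl T r a ?u \<sigma>) (Tmap_incl T r b ?u \<tau>) \<or>
      Tless T (card ?u) (Tmap_incl T r b ?u \<tau>) (Tmap_incl T r a ?u \<sigma>)"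
    using strict_linear_on_total[OF strict_linear_on_Tset] Tmap_incl_in_Tset[OF u] \<sigma>(1) \<tau>(1) by blast
  then show ?thesis
    using DT_less_iff_Tless[OF u _ _ \<sigma>(1) \<tau>(1)] DT_less_iff_Tless[OF u _ _ \<tau>(1) \<sigma>(1)] by blast
qed

lemma strict_linear_on_DT: "strict_linear_on (DT T X r) (DT_less T r)"
  unfolding strict_linear_on_def
  using DT_less_irrefl DT_less_trans DT_less_total by fast


lemma interleaved_less_iff_DT_less:
  assumes ss: "set ss \<subseteq> X" "sorted_wrt r ss" and ts: "set ts \<subseteq> X" "sorted_wrt r ts"
    and \<sigma>: "\<sigma> \<in> Tset T (length ss)" and \<tau>: "\<tau> \<in> Tset T (length ts)"
  shows "interleaved_less T r ss \<sigma> ts \<tau> \<longleftrightarrow> DT_less T r (set ss, \<sigma>) (set ts, \<tau>)"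
proof -
  define U where "U = set ss \<union> set ts"
  have U: "U \<subseteq> X" "finite U" unfolding U_def using ss ts by auto
  have card: "card (set ss) = length ss" "card (set ts) = length ts"
    using card_set_sorted[OF lin ss] card_set_sorted[OF lin ts] by auto
  have mor: "nat_mor (length ss) (card U) (collapse_incl r (set ss) U)"
    "nat_mor (length ts) (card U) (collapse_incl r (set ts) U)"
    using nat_mor_collapse_incl[OF lin U, of "set ss"] nat_mor_collapse_incl[OF lin U, of "set ts"]
    unfolding U_def card by auto
  have DT_less_iff: "DT_less T r (set ss, \<sigma>) (set ts, \<tau>) \<longleftrightarrow>
      Tless T (card U) (Tmap T (length ss) (card U) (collapse_incl r (set ss) U) \<sigma>)
        (Tmap T (length ts) (card U) (collapse_incl r (set ts) U) \<tau>)"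
    unfolding DT_less_def prod.case U_def card ..
  show ?thesis
  proof
    assume "interleaved_less T r ss \<sigma> ts \<tau>"
    then obtain f g where f: "nat_mor (length ss) (card U) f" and g: "nat_mor (length ts) (card U) g"
      and fg: "interleaving r ss ts f g"
      and less: "Tless T (card U) (Tmap T (length ss) (card U) f \<sigma>) (Tmap T (length ts) (card U) g \<tau>)"
      unfolding interleaved_less_def U_def by blast
    have "Tmap T (length ss) (card U) f \<sigma> = Tmap T (length ss) (card U) (collapse_incl r (set ss) U) \<sigma>"
      using interleaving_eq_collapse_incl[OF lin ss ts f[unfolded U_def] g[unfolded U_def] fg]
      unfolding U_def by (intro Tmap_cong[OF f[unfolded U_def] _ \<sigma>])
    moreover have "Tmap T (length ts) (card U) g \<tau> = Tmap T (length ts) (card U) (collapse_incl r (set ts) U) \<tau>"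
      using interleaving_eq_collapse_incl[OF lin ts ss, of g f] f g fg
      unfolding U_def Un_commute[of "set ts"] interleaving_commute[of r ts]
      by (intro Tmap_cong[OF g[unfolded U_def] _ \<tau>]) auto
    ultimately show "DT_less T r (set ss, \<sigma>) (set ts, \<tau>)" using DT_less_iff less by simp
  next
    assume "DT_less T r (set ss, \<sigma>) (set ts, \<tau>)"
    then show "interleaved_less T r ss \<sigma> ts \<tau>"
      using mor DT_less_iff interleaving_collapse_incl[OF lin ss ts]
      unfolding interleaved_less_def U_def by blast
  qed
qed

end

end

section \<open>\<open>\<vartheta>(T)\<close> is a linear order\<close>

declare thless.simps[simp del]

lemma size_less_Th: "x \<in> set ss \<Longrightarrow> size x < size (Th \<sigma> ss)"
  using size_mem_le[of x ss] by simp

lemma Th_in_thTD: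
  assumes "Th \<sigma> ss \<in> thT T"
  shows "set ss \<subseteq> thT T" "successively (thless T) ss" "\<sigma> \<in> Tset T (length ss)"
    "Tsupp T (length ss) \<sigma> = {..<length ss}"
  using assms by (cases rule: thT.cases; auto)+

lemma thless_Th_Th:
  "thless T (Th \<sigma> ss) (Th \<tau> ts) \<longleftrightarrow>
     (interleaved_less T (thless T) ss \<sigma> ts \<tau> \<and> (ss \<noteq> [] \<longrightarrow> thless T (last ss) (Th \<tau> ts))) \<or>
     (ts \<noteq> [] \<and> (thless T (Th \<sigma> ss) (last ts) \<or> Th \<sigma> ss = last ts))"
  unfolding interleaved_less_def interleaving_def by (subst thless.simps) simp

lemma thless_Th_if_le_last: "ts \<noteq> [] \<Longrightarrow> thless T s (last ts) \<or> s = last ts \<Longrightarrow> thless T s (Th \<tau> ts)"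
  by (cases s) (simp only: thless_Th_Th, blast)

text \<open>Linearity is proved by induction on the bound \<open>N\<close> on the size of terms: clause (i') of the
  order on terms of size at most \<open>N + 1\<close> only involves the order on terms of size at most \<open>N\<close>.\<close>

definition thT_upto :: "praedil \<Rightarrow> nat \<Rightarrow> thterm set" where
  "thT_upto T N = {s \<in> thT T. size s \<le> N}"

lemma thT_upto_0: "thT_upto T 0 = {}"
proof -
  have "0 < size s" for s :: thterm by (cases s) simp
  then show ?thesis unfolding thT_upto_def by (auto simp: not_le)
qed

lemma thT_upto_Suc_mono: "thT_upto T N \<subseteq> thT_upto T (Suc N)"
  unfolding thT_upto_def by auto

lemma set_subset_thT_upto: "Th \<sigma> ss \<in> thT_upto T (Suc N) \<Longrightarrow> set ss \<subseteq> thT_upto T N"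
  unfolding thT_upto_def using Th_in_thTD(1) size_less_Th by fastforce

lemma last_in_thT_upto: "Th \<sigma> ss \<in> thT_upto T (Suc N) \<Longrightarrow> ss \<noteq> [] \<Longrightarrow> last ss \<in> thT_upto T (Suc N)"
  using set_subset_thT_upto thT_upto_Suc_mono last_in_set by blast

context
  fixes T :: praedil and N :: nat
  assumes T: "prae_dilator T" and lin: "strict_linear_on (thT_upto T N) (thless T)"
begin

lemma sorted_subterms:
  assumes "Th \<sigma> ss \<in> thT_upto T (Suc N)"
  shows "sorted_wrt (thless T) ss"
proof -
  have "successively (thless T) ss" using assms Th_in_thTD(2) unfolding thT_upto_def by blast
  then show ?thesis
    using successively_iff_sorted_wrt_strong strict_linear_on_trans[OF lin]
      set_subset_thT_upto[OF assms] by (metis subsetD)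
qed

lemma subterms_in_DT:
  assumes "Th \<sigma> ss \<in> thT_upto T (Suc N)"
  shows "(set ss, \<sigma>) \<in> DT T (thT_upto T N) (thless T)"
  using assms Th_in_thTD(3,4) set_subset_thT_upto[OF assms]
    card_set_sorted[OF lin set_subset_thT_upto[OF assms] sorted_subterms[OF assms]]
  unfolding DT_def thT_upto_def by auto

lemma thless_Th_Th_iff_DT_less:
  assumes s: "Th \<sigma> ss \<in> thT_upto T (Suc N)" and t: "Th \<tau> ts \<in> thT_upto T (Suc N)"
  shows "thless T (Th \<sigma> ss) (Th \<tau> ts) \<longleftrightarrow>
    (DT_less T (thless T) (set ss, \<sigma>) (set ts, \<tau>) \<and> (ss \<noteq> [] \<longrightarrow> thless T (last ss) (Th \<tau> ts))) \<or>
    (ts \<noteq> [] \<and> (thless T (Th \<sigma> ss) (last ts) \<or> Th \<sigma> ss = last ts))"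
  unfolding thless_Th_Th
  using interleaved_less_iff_DT_less[OF T lin set_subset_thT_upto[OF s] sorted_subterms[OF s]
      set_subset_thT_upto[OF t] sorted_subterms[OF t]]
    s t Th_in_thTD(3) unfolding thT_upto_def by auto

lemma thless_trans_Suc:
  "s \<in> thT_upto T (Suc N) \<Longrightarrow> t \<in> thT_upto T (Suc N) \<Longrightarrow> u \<in> thT_upto T (Suc N) \<Longrightarrow>
   thless T s t \<Longrightarrow> thless T t u \<Longrightarrow> thless T s u"
proof (induction "size s + size t + size u" arbitrary: s t u rule: less_induct)
  case less
  obtain \<sigma> ss \<tau> ts \<upsilon> us where s: "s = Th \<sigma> ss" and t: "t = Th \<tau> ts" and u: "u = Th \<upsilon> us"
    by (metis thterm.exhaust)
  note iff = thless_Th_Th_iff_DT_less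
  note DT = subterms_in_DT[OF less.prems(1)[unfolded s]] subterms_in_DT[OF less.prems(2)[unfolded t]]
    subterms_in_DT[OF less.prems(3)[unfolded u]]
  from \<open>thless T t u\<close> consider
      (tu_last) "us \<noteq> []" "thless T t (last us) \<or> t = last us"
    | (tu_DT) "DT_less T (thless T) (set ts, \<tau>) (set us, \<upsilon>)" "ts \<noteq> [] \<longrightarrow> thless T (last ts) u"
    using iff less.prems(2,3) unfolding t u by blast
  then show ?case
  proof cases
    case tu_last
    then have "thless T s (last us)"
      using less.hyps[of s t "last us"] less.prems last_in_thT_upto[of \<upsilon> us] size_less_Th[of "last us" us \<upsilon>]
      unfolding u by auto
    then show ?thesis using thless_Th_if_le_last tu_last(1) unfolding u by blast
  next
    case tu_DT
    from \<open>thless T s t\<close> consider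
        (st_last) "ts \<noteq> []" "thless T s (last ts) \<or> s = last ts"
      | (st_DT) "DT_less T (thless T) (set ss, \<sigma>) (set ts, \<tau>)" "ss \<noteq> [] \<longrightarrow> thless T (last ss) t"
      using iff less.prems(1,2) unfolding s t by blast
    then show ?thesis
    proof cases
      case st_last
      then show ?thesis
        using tu_DT(2) less.hyps[of s "last ts" u] less.prems last_in_thT_upto[of \<tau> ts]
          size_less_Th[of "last ts" ts \<tau>] unfolding t by auto
    next
      case st_DT
      have "DT_less T (thless T) (set ss, \<sigma>) (set us, \<upsilon>)"
        using strict_linear_on_trans[OF strict_linear_on_DT[OF T lin] DT st_DT(1) tu_DT(1)] .
      moreover have "thless T (last ss) u" if "ss \<noteq> []"
        using st_DT(2) that less.hyps[of "last ss" t u] less.prems last_in_thT_upto[of \<sigma> ss]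
          size_less_Th[of "last ss" ss \<sigma>] unfolding s by auto
      ultimately show ?thesis using iff less.prems(1,3) unfolding s u by blast
    qed
  qed
qed

lemma thless_irrefl_Suc:
  assumes s: "s \<in> thT_upto T (Suc N)"
  shows "\<not> thless T s s"
proof
  assume "thless T s s"
  obtain \<sigma> ss where s_eq: "s = Th \<sigma> ss" by (cases s)
  have "\<not> DT_less T (thless T) (set ss, \<sigma>) (set ss, \<sigma>)"
    using strict_linear_on_irrefl[OF strict_linear_on_DT[OF T lin] subterms_in_DT] s unfolding s_eq by blast
  then have ne: "ss \<noteq> []" and "thless T s (last ss) \<or> s = last ss"
    using \<open>thless T s s\<close> thless_Th_Th_iff_DT_less s unfolding s_eq by blast+
  moreover have "s \<noteq> last ss"
    using size_less_Th[of "last ss" ss \<sigma>] ne unfolding s_eq by (metis last_in_set less_irrefl)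
  \<comment> \<open>\<open>last ss < s < last ss\<close> would make \<open>last ss\<close> irreflexive, but it lies in the previous stage\<close>
  moreover have "thless T (last ss) s" using thless_Th_if_le_last ne unfolding s_eq by blast
  ultimately have "thless T (last ss) (last ss)"
    using thless_trans_Suc last_in_thT_upto[of \<sigma> ss] s unfolding s_eq by blast
  then show False
    using strict_linear_on_irrefl[OF lin] set_subset_thT_upto[of \<sigma> ss] s last_in_set[OF ne]
    unfolding s_eq by blast
qed

lemma thless_total_Suc:
  "s \<in> thT_upto T (Suc N) \<Longrightarrow> t \<in> thT_upto T (Suc N) \<Longrightarrow> s \<noteq> t \<Longrightarrow> thless T s t \<or> thless T t s"
proof (induction "size s + size t" arbitrary: s t rule: less_induct)
  case less
  have by_DT: "thless T x y \<or> thless T y x"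
    if xy: "x = s \<and> y = t \<or> x = t \<and> y = s" and x: "x = Th \<alpha> xs" and y: "y = Th \<beta> ys"
      and DT_less: "DT_less T (thless T) (set xs, \<alpha>) (set ys, \<beta>)" for x y \<alpha> xs \<beta> ys
  proof -
    have in_Suc: "Th \<alpha> xs \<in> thT_upto T (Suc N)" "Th \<beta> ys \<in> thT_upto T (Suc N)"
      using xy less.prems(1,2) unfolding x y by auto
    show ?thesis
    proof (cases "xs \<noteq> [] \<longrightarrow> thless T (last xs) y")
      case True
      then show ?thesis using DT_less thless_Th_Th_iff_DT_less[OF in_Suc] unfolding x y by blast
    next
      case False
      then have ne: "xs \<noteq> []" and not_less: "\<not> thless T (last xs) y" by auto
      have "size (last xs) + size y < size s + size t"
        using size_less_Th[of "last xs" xs \<alpha>] ne xy unfolding x by auto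
      then have "thless T y (last xs) \<or> y = last xs"
        using less.hyps[of "last xs" y] not_less last_in_thT_upto[OF in_Suc(1) ne] in_Suc(2)
        unfolding y by auto
      then show ?thesis using thless_Th_if_le_last ne unfolding x by blast
    qed
  qed
  obtain \<sigma> ss \<tau> ts where s: "s = Th \<sigma> ss" and t: "t = Th \<tau> ts" by (metis thterm.exhaust)
  have DT: "(set ss, \<sigma>) \<in> DT T (thT_upto T N) (thless T)" "(set ts, \<tau>) \<in> DT T (thT_upto T N) (thless T)"
    using subterms_in_DT less.prems(1,2) unfolding s t by auto
  have "(set ss, \<sigma>) \<noteq> (set ts, \<tau>)"
  proof
    assume "(set ss, \<sigma>) = (set ts, \<tau>)"
    moreover have "ts = ss" if "set ts = set ss"
      using sorted_list_unique[OF lin set_subset_thT_upto sorted_subterms sorted_subterms that]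
        less.prems(1,2) unfolding s t by blast
    ultimately show False using less.prems(3) unfolding s t by simp
  qed
  then consider "DT_less T (thless T) (set ss, \<sigma>) (set ts, \<tau>)" | "DT_less T (thless T) (set ts, \<tau>) (set ss, \<sigma>)"
    using strict_linear_on_total[OF strict_linear_on_DT[OF T lin] DT] by blast
  then show ?case
    using by_DT[of s t \<sigma> ss \<tau> ts] by_DT[of t s \<tau> ts \<sigma> ss] s t by cases blast+
qed

lemma strict_linear_on_thT_upto_Suc: "strict_linear_on (thT_upto T (Suc N)) (thless T)"
  unfolding strict_linear_on_def using thless_irrefl_Suc thless_trans_Suc thless_total_Suc by blast

end

lemma strict_linear_on_thT_upto:
  assumes "prae_dilator T"
  shows "strict_linear_on (thT_upto T N) (thless T)"
proof (induction N)
  case 0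
  show ?case unfolding thT_upto_0 strict_linear_on_def by simp
next
  case (Suc N)
  show ?case by (rule strict_linear_on_thT_upto_Suc[OF assms Suc.IH])
qed

lemma strict_linear_on_thT:
  assumes "prae_dilator T"
  shows "strict_linear_on (thT T) (thless T)"
proof -
  have "\<exists>N. x \<in> thT_upto T N \<and> y \<in> thT_upto T N \<and> z \<in> thT_upto T N"
    if "x \<in> thT T" "y \<in> thT T" "z \<in> thT T" for x y z
    using that unfolding thT_upto_def by (intro exI[of _ "size x + size y + size z"]) auto
  then show ?thesis
    using strict_linear_on_thT_upto[OF assms] unfolding strict_linear_on_def by metis
qed

section \<open>The collapse\<close>

definition vartheta :: "praedil \<Rightarrow> thterm set \<times> nat \<Rightarrow> thterm" where
  "vartheta T \<rho> = Th (snd \<rho>) (ordered_list (thless T) (fst \<rho>))"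

context
  fixes T :: praedil
  assumes T: "prae_dilator T"
begin

lemma ordered_list_thless:
  assumes "(a, \<sigma>) \<in> DT T (thT T) (thless T)"
  shows "set (ordered_list (thless T) a) = a" "sorted_wrt (thless T) (ordered_list (thless T) a)"
    "length (ordered_list (thless T) a) = card a"
  using assms set_ordered_list sorted_ordered_list length_ordered_list strict_linear_on_thT[OF T]
  unfolding DT_def by auto

lemma vartheta_in_thT:
  assumes "(a, \<sigma>) \<in> DT T (thT T) (thless T)"
  shows "vartheta T (a, \<sigma>) \<in> thT T"
  unfolding vartheta_def fst_conv snd_conv
proof (rule thT_intro)
  show "\<forall>s\<in>set (ordered_list (thless T) a). s \<in> thT T"
    using assms ordered_list_thless(1)[OF assms] unfolding DT_def by auto
  show "successively (thless T) (ordered_list (thless T) a)"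
    by (rule successively_if_sorted_wrt[OF ordered_list_thless(2)[OF assms]])
  show "\<sigma> \<in> Tset T (length (ordered_list (thless T) a))"
    "Tsupp T (length (ordered_list (thless T) a)) \<sigma> = {..<length (ordered_list (thless T) a)}"
    using assms ordered_list_thless(3)[OF assms] unfolding DT_def by auto
qed

lemma supp_less_vartheta:
  assumes "(a, \<sigma>) \<in> DT T (thT T) (thless T)"
  shows "fin_less (thless T) a (vartheta T (a, \<sigma>))"
  unfolding fin_less_def vartheta_def fst_conv snd_conv
proof
  let ?ss = "ordered_list (thless T) a"
  fix x assume "x \<in> a"
  then have x: "x \<in> set ?ss" using ordered_list_thless(1)[OF assms] by simp
  have "set ?ss \<subseteq> thT T" using assms ordered_list_thless(1)[OF assms] unfolding DT_def by simp
  then have "x = last ?ss \<or> thless T x (last ?ss)"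
    using sorted_wrt_le_last[OF strict_linear_on_thT[OF T] _ ordered_list_thless(2)[OF assms] x] by blast
  moreover have "?ss \<noteq> []" using x by auto
  ultimately show "thless T x (Th \<sigma> ?ss)" using thless_Th_if_le_last by blast
qed

lemma vartheta_less_vartheta:
  assumes a: "(a, \<sigma>) \<in> DT T (thT T) (thless T)" and b: "(b, \<tau>) \<in> DT T (thT T) (thless T)"
    and less: "DT_less T (thless T) (a, \<sigma>) (b, \<tau>)" and a_below: "fin_less (thless T) a (vartheta T (b, \<tau>))"
  shows "thless T (vartheta T (a, \<sigma>)) (vartheta T (b, \<tau>))"
proof -
  let ?ss = "ordered_list (thless T) a" and ?ts = "ordered_list (thless T) b"
  have "interleaved_less T (thless T) ?ss \<sigma> ?ts \<tau>"
    using interleaved_less_iff_DT_less[OF T strict_linear_on_thT[OF T], of ?ss ?ts \<sigma> \<tau>]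
      less a b ordered_list_thless[OF a] ordered_list_thless[OF b] unfolding DT_def by auto
  moreover have "thless T (last ?ss) (vartheta T (b, \<tau>))" if "?ss \<noteq> []"
    using a_below last_in_set[OF that] ordered_list_thless(1)[OF a] unfolding fin_less_def by auto
  ultimately show ?thesis unfolding vartheta_def fst_conv snd_conv thless_Th_Th by blast
qed

lemma bh_collapse_vartheta: "bh_collapse T (thT T) (thless T) (vartheta T)"
  unfolding bh_collapse_def DT_supp_def
  using vartheta_in_thT supp_less_vartheta vartheta_less_vartheta by (simp add: Ball_def split_paired_all)

end

theorem theorem4p3:
  assumes "prae_dilator T"
  shows "bh_fixed_point T (thT T) (thless T)"
  unfolding bh_fixed_point_def
  using strict_linear_on_thT[OF assms] bh_collapse_vartheta[OF assms] by blast

end
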